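(* Let $L$ be a complete subfield of $\hat{\bar L}_0$ containing $L_0$, and let $Q_1,Q_2$ be points of $\mathfrak Y_{\rm rig}\hat\otimes L$ with $\pi_{\rm rig}(Q_1)=\pi_{\rm rig}(Q_2)=P$. Write $Q^w:=w_{\rm rig}(Q)$. (1) $Q_1$ is too singular iff $Q_2$ is too singular iff $\nu_{\mathfrak X}(P)\ge e/(e+1)$; in that case $\nu_{\mathfrak Y}(Q_2^w)=1/(e+1)$. (2) If $Q_1,Q_2$ are both canonical or both anti-canonical, then $\nu_{\mathfrak Y}(Q_2^w)=1-\nu_{\mathfrak Y}(Q_1)$. (3) If $Q_1$ is canonical and $Q_2$ is anti-canonical, then $\nu_{\mathfrak Y}(Q_2^w)=e^{-1}\nu_{\mathfrak Y}(Q_1)$. (4) If $Q_1$ is anti-canonical and $Q_2$ is canonical, then $\nu_{\mathfrak Y}(Q_2^w)=1-e(1-\nu_{\mathfrak Y}(Q_1))$.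
   Context: $p$ prime; $L_0/\mathbb Q_p$ finite, ring of integers $\mathcal O_0$, uniformizer $\varpi$, residue field $\kappa\cong\mathbb F_q$; $\mathrm{val}(\varpi)=1$. $X,Y$ are curves over $\mathcal O_0$ (reduced, flat separated finite type, connected one-dimensional geometric fibres), $\pi:Y\to X$ with: $X$ smooth; $Y$ regular; $\pi\otimes\kappa$ has a section $s$; $Y\otimes\kappa$ reduced with two components meeting at $\kappa$-rational points with completed local ring $\cong\kappa[[u,v]]/(uv)$, each singular point the only point over its image; $w$ an $\mathcal O_0$-automorphism of $Y$ whose reduction interchanges the components; $\pi$ finite flat of degree $1+e$, $e>1$ an integer. $\mathfrak X_{\rm rig},\mathfrak Y_{\rm rig}$ are the Raynaud generic fibres of the formal completions along special fibres. The measures of singularity of Goren–Kassaei are functions $\nu_{\mathfrak Y}$ on points of $\mathfrak Y_{\rm rig}\hat\otimes L$ (values in $\mathbb Q\cap[0,1]$; $0$/$1$ on points specializing to nonsingular points of $s(X\otimes\kappa)$/the other component, a normalized annulus-parameter valuation on residue annuli of singular points) and $\nu_{\mathfrak X}$ on points of $\mathfrak X_{\rm rig}\hat\otimes L$ (values in $\mathbb Q_{\ge0}$, significant when $<1$), satisfying, for every point $Q$: if $\nu_{\mathfrak Y}(Q)<e/(e+1)$ ($Q$ "canonical") then $\nu_{\mathfrak Y}(Q)=\nu_{\mathfrak X}(\pi_{\rm rig}Q)$, and canonical points form the image of a section $\mathfrak s_{\rm rig}:\mathfrak X_{\rm rig}[0,e/(e+1))\to\mathfrak Y_{\rm rig}[0,e/(e+1))$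 of $\pi_{\rm rig}$; if $\nu_{\mathfrak Y}(Q)>e/(e+1)$ ($Q$ "anti-canonical") then $\nu_{\mathfrak Y}(Q)=1-e^{-1}\nu_{\mathfrak X}(\pi_{\rm rig}Q)$; $\nu_{\mathfrak Y}(Q)=e/(e+1)$ ($Q$ "too singular") iff $\nu_{\mathfrak X}(\pi_{\rm rig}Q)\ge e/(e+1)$; $\nu_{\mathfrak Y}(w_{\rm rig}Q)=1-\nu_{\mathfrak Y}(Q)$. *)

theory Defs
  imports Complex_Main
begin

text \<open>Points of the rigid spaces
  (after base change to L) are modelled by types 'y and 'x; proj, w are the maps
  pi_rig and w_rig on points; nuY, nuX the measures of singularity; e the degree
  parameter (deg proj = 1 + e).\<close>

definition canonical :: "('y \<Rightarrow> real) \<Rightarrow> nat \<Rightarrow> 'y \<Rightarrow> bool" where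
  "canonical nuY e Q \<longleftrightarrow> nuY Q < real e / (real e + 1)"

definition anti_canonical :: "('y \<Rightarrow> real) \<Rightarrow> nat \<Rightarrow> 'y \<Rightarrow> bool" where
  "anti_canonical nuY e Q \<longleftrightarrow> nuY Q > real e / (real e + 1)"

definition too_singular :: "('y \<Rightarrow> real) \<Rightarrow> nat \<Rightarrow> 'y \<Rightarrow> bool" where
  "too_singular nuY e Q \<longleftrightarrow> nuY Q = real e / (real e + 1)"

definition GK_measures ::
  "('y \<Rightarrow> 'x) \<Rightarrow> ('y \<Rightarrow> 'y) \<Rightarrow> ('y \<Rightarrow> real) \<Rightarrow> ('x \<Rightarrow> real) \<Rightarrow> nat \<Rightarrow> bool" where
  "GK_measures proj w nuY nuX e \<longleftrightarrow>
     e > 1 \<and>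
     (\<forall>Q. nuY Q \<in> \<rat> \<and> 0 \<le> nuY Q \<and> nuY Q \<le> 1) \<and>
     (\<forall>P. nuX P \<in> \<rat> \<and> 0 \<le> nuX P) \<and>
     (\<forall>Q. canonical nuY e Q \<longrightarrow> nuY Q = nuX (proj Q)) \<and>
     (\<exists>s. (\<forall>P. nuX P < real e / (real e + 1) \<longrightarrow> proj (s P) = P) \<and>
          {Q. canonical nuY e Q} = s ` {P. nuX P < real e / (real e + 1)}) \<and>
     (\<forall>Q. anti_canonical nuY e Q \<longrightarrow> nuY Q = 1 - nuX (proj Q) / real e) \<and>
     (\<forall>Q. too_singular nuY e Q \<longleftrightarrow> nuX (proj Q) \<ge> real e / (real e + 1)) \<and>
     (\<forall>Q. nuY (w Q) = 1 - nuY Q)"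

end

theory Submission
  imports Defs
begin

text \<open>In each regime, nuY Q and hence nuY (w Q) = 1 - nuY Q is an explicit affine
  function of nuX (proj Q), and being too singular depends only on nuX (proj Q).
  Points over the same P share nuX P, so solving the formula for Q1 for nuX P and
  substituting into the formula for w Q2 gives every case.\<close>

lemma GK_measures_degree_gt_1:
  "GK_measures proj w nuY nuX e \<Longrightarrow> e > 1"
  unfolding GK_measures_def by blast

lemma GK_measures_canonical:
  "GK_measures proj w nuY nuX e \<Longrightarrow> canonical nuY e Q \<Longrightarrow> nuY Q = nuX (proj Q)"
  unfolding GK_measures_def by blast

lemma GK_measures_anti_canonical:
  "GK_measures proj w nuY nuX e \<Longrightarrow> anti_canonical nuY e Q
    \<Longrightarrow> nuY Q = 1 - nuX (proj Q) / real e"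
  unfolding GK_measures_def by blast

lemma GK_measures_too_singular_iff:
  "GK_measures proj w nuY nuX e
    \<Longrightarrow> too_singular nuY e Q \<longleftrightarrow> nuX (proj Q) \<ge> real e / (real e + 1)"
  unfolding GK_measures_def by blast

lemma GK_measures_involution:
  "GK_measures proj w nuY nuX e \<Longrightarrow> nuY (w Q) = 1 - nuY Q"
  unfolding GK_measures_def by blast

lemma GK_measures_nuX_of_anti_canonical:
  assumes "GK_measures proj w nuY nuX e" and "anti_canonical nuY e Q"
  shows "nuX (proj Q) = real e * (1 - nuY Q)"
proof -
  have "real e > 0"
    using GK_measures_degree_gt_1[OF assms(1)] by simp
  then show ?thesis
    using GK_measures_anti_canonical[OF assms] by (simp add: field_simps)
qed

lemma GK_measures_w_canonical:
  "GK_measures proj w nuY nuX e \<Longrightarrow> canonical nuY e Q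
    \<Longrightarrow> nuY (w Q) = 1 - nuX (proj Q)"
  by (simp add: GK_measures_involution GK_measures_canonical)

lemma GK_measures_w_anti_canonical:
  "GK_measures proj w nuY nuX e \<Longrightarrow> anti_canonical nuY e Q
    \<Longrightarrow> nuY (w Q) = nuX (proj Q) / real e"
  by (simp add: GK_measures_involution GK_measures_anti_canonical)

lemma GK_measures_w_too_singular:
  assumes "GK_measures proj w nuY nuX e" and "too_singular nuY e Q"
  shows "nuY (w Q) = 1 / (real e + 1)"
proof -
  have "real e + 1 > 0" by simp
  then show ?thesis
    using assms(2) unfolding GK_measures_involution[OF assms(1)] too_singular_def
    by (simp add: field_simps)
qed

theorem corollary2p4:
  fixes proj :: "'y \<Rightarrow> 'x" and w :: "'y \<Rightarrow> 'y"
    and nuY :: "'y \<Rightarrow> real" and nuX :: "'x \<Rightarrow> real" and e :: nat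
    and Q1 Q2 :: 'y and P :: 'x
  assumes "GK_measures proj w nuY nuX e"
    and "proj Q1 = P" and "proj Q2 = P"
  shows "(too_singular nuY e Q1 \<longleftrightarrow> too_singular nuY e Q2)
       \<and> (too_singular nuY e Q2 \<longleftrightarrow> nuX P \<ge> real e / (real e + 1))
       \<and> (too_singular nuY e Q1 \<longrightarrow> nuY (w Q2) = 1 / (real e + 1))
       \<and> ((canonical nuY e Q1 \<and> canonical nuY e Q2) \<or>
          (anti_canonical nuY e Q1 \<and> anti_canonical nuY e Q2)
            \<longrightarrow> nuY (w Q2) = 1 - nuY Q1)
       \<and> (canonical nuY e Q1 \<and> anti_canonical nuY e Q2
            \<longrightarrow> nuY (w Q2) = nuY Q1 / real e)
       \<and> (anti_canonical nuY e Q1 \<and> canonical nuY e Q2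
            \<longrightarrow> nuY (w Q2) = 1 - real e * (1 - nuY Q1))"
proof -
  note GK = assms(1)
  have too_singular_iff: "too_singular nuY e Q \<longleftrightarrow> nuX P \<ge> real e / (real e + 1)"
    if "proj Q = P" for Q
    using GK_measures_too_singular_iff[OF GK, of Q] that by simp
  have nuX_P_of_Q1:
    "canonical nuY e Q1 \<Longrightarrow> nuX P = nuY Q1"
    "anti_canonical nuY e Q1 \<Longrightarrow> nuX P = real e * (1 - nuY Q1)"
    using GK_measures_canonical[OF GK, of Q1] GK_measures_nuX_of_anti_canonical[OF GK, of Q1]
      assms(2) by auto
  have nuY_w_Q2_of_nuX_P:
    "canonical nuY e Q2 \<Longrightarrow> nuY (w Q2) = 1 - nuX P"
    "anti_canonical nuY e Q2 \<Longrightarrow> nuY (w Q2) = nuX P / real e"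
    using GK_measures_w_canonical[OF GK, of Q2] GK_measures_w_anti_canonical[OF GK, of Q2]
      assms(3) by auto
  show ?thesis
    using too_singular_iff assms(2,3) GK_measures_w_too_singular[OF GK, of Q2]
      nuX_P_of_Q1 nuY_w_Q2_of_nuX_P
    by auto
qed

end
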